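(* Let $n$ be a nonnegative integer and $a,c\in\mathbb{C}$ such that all expressions below are defined (no lower parameter zero or a negative integer). Then \[ {}_3F_2\!\left(\left.{-n,a,c \atop \frac{a-n}{2},\frac{1+a-n}{2}}\right| \frac{1}{4}\right) =\frac{(1+2c-a)_n}{(1-a)_n}\,{}_3F_2\!\left(\left.{-n,1+2c-a+n,c \atop \frac{1+2c-a}{2},\frac{2+2c-a}{2}}\right| \frac{1}{4}\right). \] Equivalently, with $M_n(a,c)=(1-a)_n(1+c-a)_n\,{}_3F_2\!\left(\left.{-n,a,c \atop \frac{a-n}{2},\frac{1+a-n}{2}}\right| \frac{1}{4}\right)$ one has $M_n(a,c)=M_n(1+2c-a+n,c)$, and $L_n(x,y)=M_n\!\left(x,\frac{x+y-n-1}{2}\right)$ satisfies $L_n(x,y)=L_n(y,x)$.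
   Context: For $a\in\mathbb{C}$, $(a)_0=1$ and $(a)_k=a(a+1)\cdots(a+k-1)$ for $k\ge1$. The hypergeometric series is ${}_rF_s\!\left(\left.{\alpha_1,\ldots,\alpha_r\atop \beta_1,\ldots,\beta_s}\right|z\right)=\sum_{k\ge0}\frac{(\alpha_1)_k\cdots(\alpha_r)_k}{k!(\beta_1)_k\cdots(\beta_s)_k}z^k$, with no lower parameter zero or a negative integer; when an upper parameter is $-n$ it is a finite sum over $0\le k\le n$. *)

theory Defs
  imports Complex_Main "HOL-Library.Nonpos_Ints"
begin

definition hyp3F2_term ::
  "complex \<Rightarrow> complex \<Rightarrow> complex \<Rightarrow> complex \<Rightarrow> complex \<Rightarrow> complex \<Rightarrow> nat \<Rightarrow> complex" where
  "hyp3F2_term a1 a2 a3 b1 b2 z k =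
     pochhammer a1 k * pochhammer a2 k * pochhammer a3 k
     / (fact k * pochhammer b1 k * pochhammer b2 k) * z ^ k"

definition term3F2 ::
  "nat \<Rightarrow> complex \<Rightarrow> complex \<Rightarrow> complex \<Rightarrow> complex \<Rightarrow> complex \<Rightarrow> complex" where
  "term3F2 n a2 a3 b1 b2 z = (\<Sum>k\<le>n. hyp3F2_term (- of_nat n) a2 a3 b1 b2 z k)"

end

(*
  Multiplied by (1 - a)_n, resp. (1 + 2c - a)_n, and simplified with the duplication formula
  (\<beta>/2)_k ((1 + \<beta>)/2)_k = (\<beta>)_2k / 4^k, the k-th term of each series becomes
  n! binom(-c, k) times the coefficient of x^(n-k) in a power of (1 - x). Summed over k, both sides
  are then the coefficient of x^n in (1 - x)^(a-1) (1 - x + x^2)^(-c): the left side expands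
  (1 + (x^2 - x))^(-c), the right side expands (1 + x/(1 - x)^2)^(-c) after factoring
  1 - x + x^2 = (1 - x)^2 (1 + x/(1 - x)^2). The rule (1 + f)^b (1 + g)^b = ((1 + f)(1 + g))^b
  behind this factorisation follows from uniqueness for the linear ODE (1 + h) G' = b h' G.
*)

theory Submission
  imports Defs "HOL-Computational_Algebra.Formal_Power_Series"
begin

unbundle fps_syntax

lemma fps_linear_ODE_unique:
  fixes F G P Q :: "'a::field_char_0 fps"
  assumes F: "P * fps_deriv F = Q * F" and G: "P * fps_deriv G = Q * G"
    and P0: "P $ 0 \<noteq> 0" and FG0: "F $ 0 = G $ 0"
  shows "F = G"
proof -
  define D where "D = F - G"
  have "P * fps_deriv D = Q * D"
    using F G by (simp add: D_def algebra_simps)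
  then have D': "fps_deriv D = inverse P * Q * D"
    using P0 by (metis inverse_mult_eq_1 mult.assoc mult_1)
  have "D $ m = 0" if "m \<le> n" for m n
    using that
  proof (induction n arbitrary: m)
    case 0
    then show ?case using FG0 by (simp add: D_def)
  next
    case (Suc n)
    have "fps_deriv D $ n = 0"
      unfolding D' fps_mult_nth using Suc.IH by (intro sum.neutral) auto
    then have "D $ Suc n = 0"
      by (simp del: of_nat_Suc)
    with Suc show ?case by (auto simp: le_Suc_eq)
  qed
  then have "D = 0" by (auto simp: fps_eq_iff)
  then show ?thesis by (simp add: D_def)
qed

lemma fps_binomial_compose_deriv:
  fixes f :: "'a::field_char_0 fps"
  assumes f0: "f $ 0 = 0"
  shows "(1 + f) * fps_deriv (fps_binomial b oo f) = fps_const b * fps_deriv f * (fps_binomial b oo f)"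
proof -
  have binomial_ODE: "(1 + fps_X) * fps_deriv (fps_binomial b) = fps_const b * fps_binomial b"
    by (simp add: fps_eq_iff gbinomial_mult_1 field_simps)
  have "(1 + f) * fps_deriv (fps_binomial b oo f)
      = (((1 + fps_X) * fps_deriv (fps_binomial b)) oo f) * fps_deriv f"
    using f0 by (simp add: fps_compose_deriv fps_compose_add_distrib fps_compose_mult_distrib mult.assoc)
  also have "\<dots> = fps_const b * fps_deriv f * (fps_binomial b oo f)"
    by (simp add: binomial_ODE fps_const_mult_apply_left[symmetric])
  finally show ?thesis .
qed

lemma fps_binomial_compose_mult:
  fixes f g :: "'a::field_char_0 fps"
  assumes f0: "f $ 0 = 0" and g0: "g $ 0 = 0"
  shows "(fps_binomial b oo f) * (fps_binomial b oo g) = fps_binomial b oo (f + g + f * g)"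
proof (rule fps_linear_ODE_unique)
  define h where "h = f + g + f * g"
  have h0: "h $ 0 = 0" using f0 g0 by (simp add: h_def)
  show "(1 + h) * fps_deriv (fps_binomial b oo h) = fps_const b * fps_deriv h * (fps_binomial b oo h)"
    using fps_binomial_compose_deriv[OF h0] .
  have "(1 + h) * fps_deriv ((fps_binomial b oo f) * (fps_binomial b oo g))
      = (1 + g) * ((1 + f) * fps_deriv (fps_binomial b oo f)) * (fps_binomial b oo g)
        + (1 + f) * (fps_binomial b oo f) * ((1 + g) * fps_deriv (fps_binomial b oo g))"
    by (simp add: h_def algebra_simps)
  also have "\<dots> = fps_const b * fps_deriv h * ((fps_binomial b oo f) * (fps_binomial b oo g))"
    unfolding fps_binomial_compose_deriv[OF f0] fps_binomial_compose_deriv[OF g0]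
    by (simp add: h_def algebra_simps)
  finally show "(1 + h) * fps_deriv ((fps_binomial b oo f) * (fps_binomial b oo g))
      = fps_const b * fps_deriv h * ((fps_binomial b oo f) * (fps_binomial b oo g))" .
qed (use f0 g0 in simp_all)

definition fps_neg_binomial :: "'a::field_char_0 \<Rightarrow> 'a fps" where
  "fps_neg_binomial z = fps_binomial (- z) oo - fps_X"

lemma fps_neg_binomial_nth: "fps_neg_binomial z $ m = pochhammer z m / fact m"
  by (simp add: fps_neg_binomial_def fps_compose_uminus' gbinomial_pochhammer)

lemma fps_neg_binomial_add: "fps_neg_binomial (z + w) = fps_neg_binomial z * fps_neg_binomial w"
  using fps_binomial_add_mult[of "- z" "- w"]
  by (simp add: fps_neg_binomial_def fps_compose_mult_distrib)

lemma fps_neg_binomial_power: "fps_neg_binomial z ^ k = fps_neg_binomial (of_nat k * z)"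
  by (simp add: fps_neg_binomial_def fps_compose_power fps_binomial_power)

lemma fps_neg_binomial_minus_of_nat: "fps_neg_binomial (- of_nat k) = (1 - fps_X) ^ k"
  by (simp add: fps_neg_binomial_def fps_binomial_of_nat fps_compose_power[symmetric]
      fps_compose_add_distrib)

lemma one_minus_fps_X_squared_mult_neg_binomial_2: "(1 - fps_X) ^ 2 * fps_neg_binomial 2 = 1"
proof -
  have "(1 - fps_X) ^ 2 * fps_neg_binomial 2 = fps_neg_binomial (- 2 + 2)"
    by (simp only: fps_neg_binomial_add fps_neg_binomial_minus_of_nat[of 2, simplified])
  then show ?thesis by (simp add: fps_neg_binomial_def)
qed

lemma fps_binomial_compose_X2_minus_X:
  "fps_binomial b oo (fps_X ^ 2 - fps_X) =
     fps_neg_binomial (- 2 * b) * (fps_binomial b oo (fps_X * fps_neg_binomial 2))"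
proof -
  define u :: "'a fps" where "u = fps_X ^ 2 - 2 * fps_X"
  define w :: "'a fps" where "w = fps_X * fps_neg_binomial 2"
  have "fps_binomial b oo u = (fps_binomial b oo - fps_X) * (fps_binomial b oo - fps_X)"
    by (subst fps_binomial_compose_mult) (simp_all add: u_def power2_eq_square algebra_simps)
  also have "\<dots> = fps_neg_binomial (- 2 * b)"
    by (simp add: fps_neg_binomial_def fps_binomial_add_mult[symmetric] fps_compose_mult_distrib[symmetric])
  finally have u: "fps_binomial b oo u = fps_neg_binomial (- 2 * b)" .
  have "u + w + u * w = u + fps_X * ((1 - fps_X) ^ 2 * fps_neg_binomial 2)"
    by (simp add: u_def w_def power2_eq_square algebra_simps)
  also have "\<dots> = fps_X ^ 2 - fps_X"
    by (simp add: one_minus_fps_X_squared_mult_neg_binomial_2 u_def)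
  finally have uw: "u + w + u * w = fps_X ^ 2 - fps_X" .
  have "fps_binomial b oo (fps_X ^ 2 - fps_X) = (fps_binomial b oo u) * (fps_binomial b oo w)"
    unfolding uw[symmetric] by (rule fps_binomial_compose_mult[symmetric]) (simp_all add: u_def w_def)
  then show ?thesis by (simp add: u w_def)
qed

lemma fps_mult_compose_nth:
  fixes F B g :: "'a::idom fps"
  assumes g0: "g $ 0 = 0"
  shows "(F * (B oo g)) $ n = (\<Sum>i\<le>n. B $ i * (F * g ^ i) $ n)"
proof -
  have compose_nth: "(B oo g) $ m = (\<Sum>i\<le>n. B $ i * (g ^ i) $ m)" if "m \<le> n" for m
    unfolding fps_compose_nth
    by (rule sum.mono_neutral_left)
      (use that startsby_zero_power_prefix[OF g0] in \<open>auto simp: atLeast0AtMost\<close>)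
  have "(F * (B oo g)) $ n = (\<Sum>j=0..n. F $ j * (\<Sum>i\<le>n. B $ i * (g ^ i) $ (n - j)))"
    by (simp add: fps_mult_nth compose_nth)
  also have "\<dots> = (\<Sum>i\<le>n. B $ i * (\<Sum>j=0..n. F $ j * (g ^ i) $ (n - j)))"
    by (simp add: sum_distrib_left sum.swap[of _ "{0..n}"] mult_ac)
  also have "\<dots> = (\<Sum>i\<le>n. B $ i * (F * g ^ i) $ n)"
    by (simp add: fps_mult_nth)
  finally show ?thesis .
qed

lemma fps_neg_binomial_mult_X2_minus_X_power_nth:
  assumes "k \<le> n"
  shows "(fps_neg_binomial z * (fps_X ^ 2 - fps_X) ^ k) $ n
       = (-1) ^ k * pochhammer (z - of_nat k) (n - k) / fact (n - k)"
proof -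
  have "fps_X ^ 2 - fps_X = fps_const (-1) * (fps_X * (1 - fps_X :: 'a fps))"
    by (simp add: algebra_simps power2_eq_square flip: fps_const_neg)
  then have "(fps_X ^ 2 - fps_X) ^ k = fps_const ((-1) ^ k) * (fps_X ^ k * (1 - fps_X :: 'a fps) ^ k)"
    by (simp only: power_mult_distrib fps_const_power)
  also have "\<dots> = fps_const ((-1) ^ k) * (fps_X ^ k * fps_neg_binomial (- of_nat k))"
    by (simp only: fps_neg_binomial_minus_of_nat)
  finally have "fps_neg_binomial z * (fps_X ^ 2 - fps_X) ^ k
      = fps_const ((-1) ^ k) * (fps_X ^ k * (fps_neg_binomial z * fps_neg_binomial (- of_nat k)))"
    by (simp add: mult_ac)
  also have "fps_neg_binomial z * fps_neg_binomial (- of_nat k) = fps_neg_binomial (z - of_nat k)"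
    by (simp flip: fps_neg_binomial_add)
  finally show ?thesis
    using assms by (simp add: fps_X_power_mult_nth fps_neg_binomial_nth)
qed

lemma fps_neg_binomial_mult_X_neg_binomial_2_power_nth:
  assumes "k \<le> n"
  shows "(fps_neg_binomial z * (fps_X * fps_neg_binomial 2) ^ k) $ n
       = pochhammer (z + 2 * of_nat k) (n - k) / fact (n - k)"
proof -
  have "fps_neg_binomial z * (fps_X * fps_neg_binomial 2) ^ k
      = fps_X ^ k * fps_neg_binomial (z + 2 * of_nat k)"
    by (simp add: power_mult_distrib fps_neg_binomial_power fps_neg_binomial_add mult_ac)
  then show ?thesis
    using assms by (simp add: fps_X_power_mult_nth fps_neg_binomial_nth)
qed

lemma sum_gbinomial_pochhammer_transform:
  fixes b z :: "'a::field_char_0"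
  shows "(\<Sum>k\<le>n. (b gchoose k) * ((-1) ^ k * pochhammer (z - of_nat k) (n - k) / fact (n - k)))
       = (\<Sum>k\<le>n. (b gchoose k) * (pochhammer (z - 2 * b + 2 * of_nat k) (n - k) / fact (n - k)))"
proof -
  define w :: "'a fps" where "w = fps_X * fps_neg_binomial 2"
  have "(\<Sum>k\<le>n. (b gchoose k) * ((-1) ^ k * pochhammer (z - of_nat k) (n - k) / fact (n - k)))
      = (\<Sum>k\<le>n. fps_binomial b $ k * (fps_neg_binomial z * (fps_X ^ 2 - fps_X) ^ k) $ n)"
    by (intro sum.cong refl) (simp add: fps_neg_binomial_mult_X2_minus_X_power_nth)
  also have "\<dots> = (fps_neg_binomial z * (fps_binomial b oo (fps_X ^ 2 - fps_X))) $ n"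
    by (simp add: fps_mult_compose_nth)
  also have "\<dots> = (fps_neg_binomial (z - 2 * b) * (fps_binomial b oo w)) $ n"
    unfolding fps_binomial_compose_X2_minus_X w_def
    by (simp add: mult.assoc[symmetric] flip: fps_neg_binomial_add)
  also have "\<dots> = (\<Sum>k\<le>n. fps_binomial b $ k * (fps_neg_binomial (z - 2 * b) * w ^ k) $ n)"
    by (simp add: fps_mult_compose_nth w_def)
  also have "\<dots> = (\<Sum>k\<le>n. (b gchoose k) * (pochhammer (z - 2 * b + 2 * of_nat k) (n - k) / fact (n - k)))"
    by (intro sum.cong refl) (simp add: w_def fps_neg_binomial_mult_X_neg_binomial_2_power_nth)
  finally show ?thesis .
qed

lemma pochhammer_minus_of_nat:
  assumes "k \<le> n"
  shows "pochhammer (- of_nat n :: 'a::field_char_0) k = (-1) ^ k * fact n / fact (n - k)"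
proof -
  have "(-1) ^ k * pochhammer (- of_nat n :: 'a) k / fact k = fact n / (fact k * fact (n - k))"
    using assms by (simp flip: gbinomial_pochhammer binomial_gbinomial add: binomial_fact)
  then have "(-1) ^ k * pochhammer (- of_nat n :: 'a) k = fact n / fact (n - k)"
    by (simp add: field_simps)
  then have "(-1) ^ k * ((-1) ^ k * pochhammer (- of_nat n :: 'a) k) = (-1) ^ k * fact n / fact (n - k)"
    by simp
  then show ?thesis
    by (simp add: mult.assoc[symmetric] flip: power_add)
qed

lemma pochhammer_half_mult:
  fixes z :: "'a::field_char_0"
  shows "pochhammer (z / 2) k * pochhammer ((1 + z) / 2) k = pochhammer z (2 * k) / 4 ^ k"
proof -
  have "pochhammer (2 * (z / 2)) (2 * k) = of_nat (2 ^ (2 * k)) * pochhammer (z / 2) k * pochhammer (z / 2 + 1 / 2) k"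
    by (rule pochhammer_double)
  moreover have "z / 2 + 1 / 2 = (1 + z) / 2"
    by (simp add: field_simps)
  ultimately show ?thesis
    by (simp add: power_mult)
qed

lemma pochhammer_double_nonzero:
  fixes z :: "'a::field_char_0"
  assumes "z / 2 \<notin> \<int>\<^sub>\<le>\<^sub>0" and "(1 + z) / 2 \<notin> \<int>\<^sub>\<le>\<^sub>0"
  shows "pochhammer z (2 * k) \<noteq> 0"
proof -
  have "pochhammer (z / 2) k \<noteq> 0" and "pochhammer ((1 + z) / 2) k \<noteq> 0"
    using assms by (auto simp: pochhammer_eq_0_iff)
  then show ?thesis
    using pochhammer_half_mult[of z k] by auto
qed

lemma pochhammer_mult_hyp3F2_term_quarter:
  fixes \<beta> c :: complex
  assumes "k \<le> n" and "pochhammer \<beta> (2 * k) \<noteq> 0"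
  shows "pochhammer \<beta> n * hyp3F2_term (- of_nat n) (\<beta> + of_nat n) c (\<beta> / 2) ((1 + \<beta>) / 2) (1 / 4) k
       = fact n * ((- c) gchoose k) * (pochhammer (\<beta> + 2 * of_nat k) (n - k) / fact (n - k))"
proof -
  have "n + k = 2 * k + (n - k)"
    using assms(1) by simp
  then have shift: "pochhammer \<beta> n * pochhammer (\<beta> + of_nat n) k
      = pochhammer \<beta> (2 * k) * pochhammer (\<beta> + 2 * of_nat k) (n - k)"
    using pochhammer_product'[of \<beta> n k] pochhammer_product'[of \<beta> "2 * k" "n - k"]
    by (simp add: add.commute)
  have "pochhammer \<beta> n * hyp3F2_term (- of_nat n) (\<beta> + of_nat n) c (\<beta> / 2) ((1 + \<beta>) / 2) (1 / 4) k
      = pochhammer (- of_nat n) k * (pochhammer \<beta> n * pochhammer (\<beta> + of_nat n) k) * pochhammer c k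
        / (fact k * (pochhammer (\<beta> / 2) k * pochhammer ((1 + \<beta>) / 2) k) * 4 ^ k)"
    by (simp add: hyp3F2_term_def power_one_over mult_ac)
  also have "\<dots> = pochhammer (- of_nat n) k * pochhammer (\<beta> + 2 * of_nat k) (n - k) * pochhammer c k / fact k"
    using assms(2) by (simp add: shift pochhammer_half_mult)
  also have "\<dots> = fact n * ((- c) gchoose k) * (pochhammer (\<beta> + 2 * of_nat k) (n - k) / fact (n - k))"
    using assms(1) by (simp add: pochhammer_minus_of_nat gbinomial_pochhammer mult_ac)
  finally show ?thesis .
qed

lemma pochhammer_mult_term3F2_quarter:
  fixes \<beta> c :: complex
  assumes "\<beta> / 2 \<notin> \<int>\<^sub>\<le>\<^sub>0" and "(1 + \<beta>) / 2 \<notin> \<int>\<^sub>\<le>\<^sub>0"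
  shows "pochhammer \<beta> n * term3F2 n (\<beta> + of_nat n) c (\<beta> / 2) ((1 + \<beta>) / 2) (1 / 4)
       = fact n * (\<Sum>k\<le>n. ((- c) gchoose k) * (pochhammer (\<beta> + 2 * of_nat k) (n - k) / fact (n - k)))"
  unfolding term3F2_def sum_distrib_left
  by (intro sum.cong refl)
    (simp add: pochhammer_mult_hyp3F2_term_quarter pochhammer_double_nonzero assms mult.assoc)

lemma pochhammer_one_minus_mult_term3F2_quarter:
  fixes a c :: complex
  assumes "(a - of_nat n) / 2 \<notin> \<int>\<^sub>\<le>\<^sub>0" and "(1 + a - of_nat n) / 2 \<notin> \<int>\<^sub>\<le>\<^sub>0"
  shows "pochhammer (1 - a) n * term3F2 n a c ((a - of_nat n) / 2) ((1 + a - of_nat n) / 2) (1 / 4)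
       = fact n * (\<Sum>k\<le>n. ((- c) gchoose k)
           * ((-1) ^ k * pochhammer (1 - a - of_nat k) (n - k) / fact (n - k)))"
proof -
  have reflect: "(-1) ^ n * pochhammer (a - of_nat n + 2 * of_nat k) (n - k)
      = (-1) ^ k * pochhammer (1 - a - of_nat k) (n - k)" if "k \<le> n" for k
  proof -
    have "pochhammer (1 - a - of_nat k) (n - k)
        = (-1) ^ (n - k) * pochhammer (a - of_nat n + 2 * of_nat k) (n - k)"
      using pochhammer_minus[of "a + of_nat k - 1" "n - k"] that by (simp add: algebra_simps)
    moreover have "(-1 :: complex) ^ n = (-1) ^ k * (-1) ^ (n - k)"
      using that by (simp flip: power_add)
    ultimately show ?thesis
      by (simp add: mult.assoc[symmetric] flip: power_add)
  qed
  have "pochhammer (1 - a) n * term3F2 n a c ((a - of_nat n) / 2) ((1 + a - of_nat n) / 2) (1 / 4)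
      = (-1) ^ n * (pochhammer (a - of_nat n) n
          * term3F2 n (a - of_nat n + of_nat n) c ((a - of_nat n) / 2) ((1 + (a - of_nat n)) / 2) (1 / 4))"
    using pochhammer_minus[of "a - 1" n] by (simp add: algebra_simps)
  also have "\<dots> = fact n * (\<Sum>k\<le>n. (-1) ^ n * (((- c) gchoose k)
      * (pochhammer (a - of_nat n + 2 * of_nat k) (n - k) / fact (n - k))))"
    using pochhammer_mult_term3F2_quarter[of "a - of_nat n" n c] assms
    by (simp add: add_diff_eq sum_distrib_left mult_ac)
  also have "\<dots> = fact n * (\<Sum>k\<le>n. ((- c) gchoose k)
      * ((-1) ^ k * pochhammer (1 - a - of_nat k) (n - k) / fact (n - k)))"
    by (intro arg_cong[where f = "(*) (fact n)"] sum.cong refl)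
      (simp add: reflect[symmetric] mult.left_commute)
  finally show ?thesis .
qed

theorem mainTheorem14:
  fixes n :: nat and a c :: complex
  assumes "(a - of_nat n) / 2 \<notin> \<int>\<^sub>\<le>\<^sub>0"
      and "(1 + a - of_nat n) / 2 \<notin> \<int>\<^sub>\<le>\<^sub>0"
      and "(1 + 2 * c - a) / 2 \<notin> \<int>\<^sub>\<le>\<^sub>0"
      and "(2 + 2 * c - a) / 2 \<notin> \<int>\<^sub>\<le>\<^sub>0"
      and "pochhammer (1 - a) n \<noteq> 0"
  shows "term3F2 n a c ((a - of_nat n) / 2) ((1 + a - of_nat n) / 2) (1 / 4)
       = pochhammer (1 + 2 * c - a) n / pochhammer (1 - a) n
         * term3F2 n (1 + 2 * c - a + of_nat n) c ((1 + 2 * c - a) / 2) ((2 + 2 * c - a) / 2) (1 / 4)"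
proof -
  have "pochhammer (1 - a) n * term3F2 n a c ((a - of_nat n) / 2) ((1 + a - of_nat n) / 2) (1 / 4)
      = fact n * (\<Sum>k\<le>n. ((- c) gchoose k)
          * ((-1) ^ k * pochhammer (1 - a - of_nat k) (n - k) / fact (n - k)))"
    using assms(1,2) by (rule pochhammer_one_minus_mult_term3F2_quarter)
  also have "\<dots> = fact n * (\<Sum>k\<le>n. ((- c) gchoose k)
      * (pochhammer (1 + 2 * c - a + 2 * of_nat k) (n - k) / fact (n - k)))"
    using sum_gbinomial_pochhammer_transform[of "- c" "1 - a" n] by (simp add: algebra_simps)
  also have "\<dots> = pochhammer (1 + 2 * c - a) n
      * term3F2 n (1 + 2 * c - a + of_nat n) c ((1 + 2 * c - a) / 2) ((2 + 2 * c - a) / 2) (1 / 4)"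
    using pochhammer_mult_term3F2_quarter[of "1 + 2 * c - a" n c] assms(3,4)
    by (simp add: algebra_simps)
  finally show ?thesis
    using assms(5) by (simp add: field_simps)
qed

end
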